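(* Let $A$, $b$, $H$, $w_0$, $x_0=A^Tw_0$, and the sequences $r_k=b-Ax_k$, $x_k$ be as in the first-order CTA iteration in the context, and assume $Hr_k\ne0$ for all $k\ge0$ (so the sequences are infinite). (1) If $\operatorname{rank}(A)=m$, then $x_k$ converges to a solution of $Ax=b$; if $H=AA^T$, it converges to the minimum-norm solution of $Ax=b$. (2) $A^Tr_k\to0$. (3) If $Ax=b$ is solvable and $\{x_k\}$ is bounded, then $r_k\to0$ and every accumulation point of $\{x_k\}$ solves $Ax=b$. (4) If $Ax=b$ is solvable and $H=AA^T$, then for every $k$ there is $w_k\in\mathbb{R}^m$ with $x_k=A^Tw_k$; if $\{w_k\}$ is bounded, then $x_k$ converges to the minimum-norm solution $x_*$ of $Ax=b$.
   Context: $A\in\mathbb{R}^{m\times n}$, $b\in\mathbb{R}^m$; $H=AA^T$, or $H=A$ when $A$ is square symmetric positive semidefinite. For $r$ with $Hr\ne0$, $\alpha_{1,1}(r)=r^THr/r^TH^2r$ and $F_1(r)=r-\alpha_{1,1}(r)Hr$. Given $w_0\in\mathbb{R}^m$: $x_0=A^Tw_0$, $r_0=b-Ax_0$, $r_k=F_1(r_{k-1})$, and $x_k=x_{k-1}+\alpha_{1,1}(r_{k-1})r_{k-1}$ if $H=A$, $x_k=x_{k-1}+\alpha_{1,1}(r_{k-1})A^Tr_{k-1}$ if $H=AA^T$ (so $r_k=b-Ax_k$). *)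

theory Defs
  imports "HOL-Analysis.Analysis"
begin

definition alpha11 :: "real^'m^'m \<Rightarrow> real^'m \<Rightarrow> real" where
  "alpha11 H r = (r \<bullet> (H *v r)) / (r \<bullet> ((H ** H) *v r))"

definition F1 :: "real^'m^'m \<Rightarrow> real^'m \<Rightarrow> real^'m" where
  "F1 H r = r - alpha11 H r *\<^sub>R (H *v r)"

definition cta_r :: "real^'m^'m \<Rightarrow> real^'m \<Rightarrow> nat \<Rightarrow> real^'m" where
  "cta_r H r0 k = (F1 H ^^ k) r0"

text \<open>Iterates x_k = x_{k-1} + alpha_{1,1}(r_{k-1}) D r_{k-1}, where the direction
  matrix D is A^T (case H = A A^T) or the identity (case H = A).\<close>
primrec cta_x :: "real^'m^'m \<Rightarrow> real^'m^'n \<Rightarrow> real^'n \<Rightarrow> real^'m \<Rightarrow> nat \<Rightarrow> real^'n" where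
  "cta_x H D x0 r0 0 = x0"
| "cta_x H D x0 r0 (Suc k) =
     cta_x H D x0 r0 k + alpha11 H (cta_r H r0 k) *\<^sub>R (D *v cta_r H r0 k)"

definition min_norm_solution :: "real^'n^'m \<Rightarrow> real^'m \<Rightarrow> real^'n \<Rightarrow> bool" where
  "min_norm_solution A b xs \<longleftrightarrow> A *v xs = b \<and> (\<forall>y. A *v y = b \<longrightarrow> norm xs \<le> norm y)"

definition accum_point :: "(nat \<Rightarrow> 'a::topological_space) \<Rightarrow> 'a \<Rightarrow> bool" where
  "accum_point x l \<longleftrightarrow> (\<exists>\<sigma>. strict_mono \<sigma> \<and> (x \<circ> \<sigma>) \<longlonglongrightarrow> l)"

definition psd_matrix :: "real^'m^'m \<Rightarrow> bool" where
  "psd_matrix M \<longleftrightarrow> (\<forall>v. 0 \<le> v \<bullet> (M *v v))"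

end

theory Submission
  imports Defs
begin

text \<open>For symmetric \<open>H\<close> one step of the iteration is an exact line search for the residual
  norm: \<open>\<parallel>F\<^sub>1 r\<parallel>\<^sup>2 = \<parallel>r\<parallel>\<^sup>2 - (r\<cdot>Hr)\<^sup>2 / \<parallel>Hr\<parallel>\<^sup>2\<close>. Hence \<open>\<parallel>r\<^sub>k\<parallel>\<close> decreases and the decrements tend
  to 0. For positive semidefinite \<open>H\<close> one has \<open>\<parallel>Hr\<parallel>\<^sup>2 \<le> c r\<cdot>Hr\<close>, so the decrement dominates
  \<open>r\<^sub>k\<cdot>Hr\<^sub>k / c\<close>; this energy therefore tends to 0, and it controls \<open>\<parallel>A\<^sup>Tr\<^sub>k\<parallel>\<^sup>2\<close> (which equals it
  for \<open>H = AA\<^sup>T\<close>, and is at most \<open>c\<close> times it for \<open>H = A\<close>).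

  The rest is linear algebra, based on the isometry bound of an injective linear map on a subspace.
  If \<open>Ax = b\<close> is solvable, \<open>r\<^sub>k\<close> lies in the range of \<open>A\<close>, on which \<open>A\<^sup>T\<close> is injective, so
  \<open>r\<^sub>k \<rightarrow> 0\<close>. For \<open>H = AA\<^sup>T\<close> the iterates stay in the range of \<open>A\<^sup>T\<close>, on which \<open>A\<close> is injective,
  so they converge to the unique solution in that range, which is the minimum-norm solution.\<close>

lemma inner_matrix_vector_transpose:
  fixes M :: "real^'n^'m"
  shows "x \<bullet> (M *v y) = (transpose M *v x) \<bullet> y"
  by (simp add: dot_lmul_matrix)

lemma symmetric_mul_transpose: "transpose (A ** transpose A) = A ** transpose (A :: real^'n^'m)"
  by (simp add: matrix_transpose_mul)

lemma inner_mul_transpose_eq_norm_transpose: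
  fixes A :: "real^'n^'m"
  shows "v \<bullet> ((A ** transpose A) *v v) = norm (transpose A *v v)^2"
  by (simp only: matrix_vector_mul_assoc[symmetric] inner_matrix_vector_transpose power2_norm_eq_inner)

lemma psd_matrix_mul_transpose: "psd_matrix (A ** transpose (A :: real^'n^'m))"
  unfolding psd_matrix_def inner_mul_transpose_eq_norm_transpose by simp

lemma norm_F1_squared:
  assumes "transpose H = H" "H *v r \<noteq> 0"
  shows "norm (F1 H r)^2 = norm r^2 - (r \<bullet> (H *v r))^2 / norm (H *v (r::real^'m))^2"
proof -
  have HH: "r \<bullet> ((H ** H) *v r) = norm (H *v r)^2"
    by (metis assms(1) inner_matrix_vector_transpose matrix_vector_mul_assoc power2_norm_eq_inner)
  have "norm (H *v r)^2 > 0" using assms(2) by simp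
  then show ?thesis
    unfolding F1_def alpha11_def HH power2_norm_eq_inner
    by (simp add: inner_diff_left inner_diff_right inner_commute[of "H *v r" r] field_simps power2_eq_square)
qed

lemma cta_r_Suc: "cta_r H r0 (Suc k) = F1 H (cta_r H r0 k)"
  by (simp add: cta_r_def)

lemma cta_decrement_tendsto_0:
  assumes "transpose H = H" and "\<forall>k. H *v cta_r H r0 k \<noteq> 0"
  shows "(\<lambda>k. (cta_r H r0 k \<bullet> (H *v cta_r H r0 k))^2 / norm (H *v cta_r H r0 k)^2) \<longlonglongrightarrow> 0"
    (is "?t \<longlonglongrightarrow> 0")
proof -
  define n where "n k = norm (cta_r H r0 k)^2" for k
  have step: "?t k = n k - n (Suc k)" for k
    unfolding n_def cta_r_Suc norm_F1_squared[OF assms(1) assms(2)[rule_format]] by simp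
  have "n (Suc k) \<le> n k" for k
  proof -
    have "0 \<le> ?t k" by simp
    then show ?thesis using step[of k] by linarith
  qed
  then have "decseq n" by (rule decseq_SucI)
  moreover have "0 \<le> n k" for k by (simp add: n_def)
  ultimately obtain L where "n \<longlonglongrightarrow> L" using decseq_convergent by blast
  then have "(\<lambda>k. n k - n (Suc k)) \<longlonglongrightarrow> L - L" by (intro tendsto_diff LIMSEQ_Suc)
  then show ?thesis by (simp add: step)
qed

lemma psd_norm_matrix_vector_squared_le:
  fixes H :: "real^'m^'m"
  assumes "transpose H = H" and "psd_matrix H"
  obtains c where "c > 0" and "\<And>v. norm (H *v v)^2 \<le> c * (v \<bullet> (H *v v))"
proof -
  obtain c where c: "c > 0" "\<And>x. norm (H *v x) \<le> norm x * c"
    using bounded_linear.pos_bounded[OF matrix_vector_mul_bounded_linear] by blast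
  have "norm (H *v v)^2 \<le> c * (v \<bullet> (H *v v))" for v
  proof -
    define u where "u = H *v v"
    have "u \<bullet> (H *v u) \<le> norm u * norm (H *v u)" by (rule norm_cauchy_schwarz)
    also have "\<dots> \<le> norm u * (norm u * c)" by (intro mult_left_mono c(2)) simp
    finally have Hu: "u \<bullet> (H *v u) \<le> c * norm u^2" by (simp add: power2_eq_square algebra_simps)
    have vHu: "v \<bullet> (H *v u) = norm u^2"
      by (metis assms(1) inner_commute inner_matrix_vector_transpose power2_norm_eq_inner u_def)
    \<comment> \<open>evaluate the nonnegative form at \<open>v - H v / c\<close>\<close>
    have "0 \<le> (v - (1/c) *\<^sub>R u) \<bullet> (H *v (v - (1/c) *\<^sub>R u))"
      using assms(2) unfolding psd_matrix_def by blast
    also have "\<dots> = v \<bullet> (H *v v) - 2 / c * norm u^2 + (1/c)^2 * (u \<bullet> (H *v u))"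
      using vHu u_def[symmetric] power2_norm_eq_inner[of u]
      by (simp add: matrix_vector_mult_diff_distrib matrix_vector_mult_scaleR inner_diff_left
          inner_diff_right inner_commute[of u v] power2_eq_square algebra_simps)
    also have "\<dots> \<le> v \<bullet> (H *v v) - norm u^2 / c"
      using mult_left_mono[OF Hu, of "(1/c)^2"] c(1) by (simp add: power2_eq_square field_simps)
    finally show ?thesis using c(1) by (simp add: u_def field_simps)
  qed
  with c(1) show ?thesis by (rule that)
qed

lemma cta_energy_tendsto_0:
  assumes sym: "transpose H = H" and psd: "psd_matrix H"
    and nz: "\<forall>k. H *v cta_r H r0 k \<noteq> 0"
  shows "(\<lambda>k. cta_r H r0 k \<bullet> (H *v cta_r H r0 k)) \<longlonglongrightarrow> 0"
proof -
  obtain c where c: "\<And>v. norm (H *v v)^2 \<le> c * (v \<bullet> (H *v v))"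
    using psd_norm_matrix_vector_squared_le[OF sym psd] by blast
  have bound: "cta_r H r0 k \<bullet> (H *v cta_r H r0 k)
      \<le> c * ((cta_r H r0 k \<bullet> (H *v cta_r H r0 k))^2 / norm (H *v cta_r H r0 k)^2)" for k
  proof -
    define r where "r = cta_r H r0 k"
    have "0 \<le> r \<bullet> (H *v r)" using psd by (simp add: psd_matrix_def)
    then have "(r \<bullet> (H *v r)) * norm (H *v r)^2 \<le> (r \<bullet> (H *v r)) * (c * (r \<bullet> (H *v r)))"
      by (rule mult_left_mono[OF c])
    moreover have "norm (H *v r)^2 > 0" using nz by (simp add: r_def)
    ultimately show ?thesis unfolding r_def[symmetric] by (simp add: field_simps power2_eq_square)
  qed
  have "(\<lambda>k. c * ((cta_r H r0 k \<bullet> (H *v cta_r H r0 k))^2 / norm (H *v cta_r H r0 k)^2))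
      \<longlonglongrightarrow> 0"
    using tendsto_mult_left[OF cta_decrement_tendsto_0[OF sym nz], of c] by simp
  moreover have "\<forall>k. norm (cta_r H r0 k \<bullet> (H *v cta_r H r0 k))
      \<le> c * ((cta_r H r0 k \<bullet> (H *v cta_r H r0 k))^2 / norm (H *v cta_r H r0 k)^2)"
    using psd bound unfolding psd_matrix_def real_norm_def by (metis abs_of_nonneg)
  ultimately show ?thesis by (rule Lim_null_comparison[OF always_eventually, rotated])
qed

lemma tendsto_0_if_norm_squared_tendsto_0:
  fixes f :: "nat \<Rightarrow> 'a::real_normed_vector"
  assumes "(\<lambda>k. norm (f k)^2) \<longlonglongrightarrow> 0"
  shows "f \<longlonglongrightarrow> 0"
proof -
  have "(\<lambda>k. sqrt (norm (f k)^2)) \<longlonglongrightarrow> sqrt 0" by (rule tendsto_real_sqrt[OF assms])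
  then have "(\<lambda>k. norm (f k)) \<longlonglongrightarrow> 0" by simp
  then show ?thesis by (rule tendsto_norm_zero_cancel)
qed

lemma cta_mul_transpose_gradient_tendsto_0:
  fixes A :: "real^'n^'m"
  assumes "\<forall>k. (A ** transpose A) *v cta_r (A ** transpose A) r0 k \<noteq> 0"
  shows "(\<lambda>k. transpose A *v cta_r (A ** transpose A) r0 k) \<longlonglongrightarrow> 0"
  using cta_energy_tendsto_0[OF symmetric_mul_transpose psd_matrix_mul_transpose assms]
  unfolding inner_mul_transpose_eq_norm_transpose by (rule tendsto_0_if_norm_squared_tendsto_0)

lemma cta_psd_gradient_tendsto_0:
  fixes A :: "real^'m^'m"
  assumes sym: "transpose A = A" and psd: "psd_matrix A"
    and nz: "\<forall>k. A *v cta_r A r0 k \<noteq> 0"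
  shows "(\<lambda>k. A *v cta_r A r0 k) \<longlonglongrightarrow> 0"
proof (rule tendsto_0_if_norm_squared_tendsto_0)
  obtain c where c: "\<And>v. norm (A *v v)^2 \<le> c * (v \<bullet> (A *v v))"
    using psd_norm_matrix_vector_squared_le[OF sym psd] by blast
  have "(\<lambda>k. c * (cta_r A r0 k \<bullet> (A *v cta_r A r0 k))) \<longlonglongrightarrow> 0"
    using tendsto_mult_left[OF cta_energy_tendsto_0[OF sym psd nz], of c] by simp
  moreover have "\<forall>k. norm (norm (A *v cta_r A r0 k)^2) \<le> c * (cta_r A r0 k \<bullet> (A *v cta_r A r0 k))"
    using c by simp
  ultimately show "(\<lambda>k. norm (A *v cta_r A r0 k)^2) \<longlonglongrightarrow> 0"
    by (rule Lim_null_comparison[OF always_eventually, rotated])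
qed

lemma tendsto_if_injective_on_subspace:
  fixes M :: "real^'n^'m"
  assumes S: "subspace S" and inj: "\<forall>v\<in>S. M *v v = 0 \<longrightarrow> v = 0"
    and xS: "\<And>k. x k \<in> S" and "y \<in> S"
    and lim: "(\<lambda>k. M *v x k) \<longlonglongrightarrow> M *v y"
  shows "x \<longlonglongrightarrow> y"
proof -
  obtain e where e: "e > 0" "\<And>v. v \<in> S \<Longrightarrow> e * norm v \<le> norm (M *v v)"
    using injective_imp_isometric[OF closed_subspace[OF S] S matrix_vector_mul_bounded_linear inj]
    by blast
  have "(\<lambda>k. M *v (x k - y)) \<longlonglongrightarrow> 0"
    using lim by (simp add: matrix_vector_mult_diff_distrib LIM_zero)
  then have "(\<lambda>k. norm (M *v (x k - y)) / e) \<longlonglongrightarrow> 0"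
    using tendsto_divide_zero[OF tendsto_norm_zero] by blast
  moreover have "\<forall>k. norm (x k - y) \<le> norm (M *v (x k - y)) / e"
    using e subspace_diff[OF S xS \<open>y \<in> S\<close>] by (simp add: field_simps)
  ultimately have "(\<lambda>k. x k - y) \<longlonglongrightarrow> 0"
    by (rule Lim_null_comparison[OF always_eventually, rotated])
  then show ?thesis by (rule LIM_zero_cancel)
qed

lemma transpose_injective_on_range:
  fixes A :: "real^'n^'m"
  shows "\<forall>v\<in>range ((*v) A). transpose A *v v = 0 \<longrightarrow> v = 0"
proof (intro ballI impI)
  fix v assume "v \<in> range ((*v) A)" and "transpose A *v v = 0"
  then obtain w where "v = A *v w" by blast
  with \<open>transpose A *v v = 0\<close> have "v \<bullet> v = 0"
    by (metis inner_matrix_vector_transpose inner_commute inner_zero_right)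
  then show "v = 0" by simp
qed

lemma subspace_range_matrix_vector: "subspace (range ((*v) (M :: real^'n^'m)))"
  by (intro linear_subspace_image matrix_vector_mul_linear subspace_UNIV)

lemma solution_in_range_transpose_exists:
  fixes A :: "real^'n^'m"
  assumes "A *v z = b"
  obtains y where "y \<in> range ((*v) (transpose A))" and "A *v y = b"
proof -
  let ?R = "range ((*v) (transpose A))"
  obtain y q where y: "y \<in> span ?R" and q: "\<And>w. w \<in> span ?R \<Longrightarrow> orthogonal q w"
    and z: "z = y + q"
    by (rule orthogonal_subspace_decomp_exists[of ?R z]) blast
  have "q \<bullet> (transpose A *v (A *v q)) = 0"
    using q[OF span_base[OF rangeI]] by (simp add: orthogonal_def)
  then have "A *v q = 0"
    by (metis inner_matrix_vector_transpose transpose_transpose inner_eq_zero_iff)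
  then have "A *v y = b" using assms z by (simp add: matrix_vector_right_distrib)
  moreover have "y \<in> ?R"
    using y unfolding span_eq_iff[THEN iffD2, OF subspace_range_matrix_vector] .
  ultimately show ?thesis by (rule that[rotated])
qed

lemma min_norm_solution_if_in_range_transpose:
  fixes A :: "real^'n^'m"
  assumes "y \<in> range ((*v) (transpose A))" and "A *v y = b"
  shows "min_norm_solution A b y"
  unfolding min_norm_solution_def
proof (intro conjI allI impI assms(2))
  fix y' assume "A *v y' = b"
  then have "A *v (y' - y) = 0" using assms(2) by (simp add: matrix_vector_mult_diff_distrib)
  moreover obtain w where "y = transpose A *v w" using assms(1) by blast
  ultimately have orth: "y \<bullet> (y' - y) = 0"
    by (metis inner_matrix_vector_transpose transpose_transpose inner_commute inner_zero_left)
  have "norm y' ^2 = norm y ^2 + norm (y' - y) ^2"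
    using orth by (simp add: power2_norm_eq_inner algebra_simps inner_diff_right inner_commute)
  then show "norm y \<le> norm y'" by (simp add: power2_le_imp_le)
qed

lemma accum_point_image_eq_lim:
  assumes "isCont f l" and "(\<lambda>k. f (x k)) \<longlonglongrightarrow> y" and "accum_point x l"
  shows "f l = (y :: 'b::t2_space)"
proof -
  obtain \<sigma> where \<sigma>: "strict_mono \<sigma>" "(x \<circ> \<sigma>) \<longlonglongrightarrow> l"
    using assms(3) unfolding accum_point_def by blast
  have "(\<lambda>k. f ((x \<circ> \<sigma>) k)) \<longlonglongrightarrow> f l" by (rule isCont_tendsto_compose[OF assms(1) \<sigma>(2)])
  moreover have "(\<lambda>k. f ((x \<circ> \<sigma>) k)) \<longlonglongrightarrow> y"
    using LIMSEQ_subseq_LIMSEQ[OF assms(2) \<sigma>(1)] by (simp add: o_def)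
  ultimately show ?thesis by (rule LIMSEQ_unique)
qed

lemma residual_tendsto_0:
  fixes A :: "real^'n^'m"
  assumes "A *v z = b" and "\<And>k. r k = b - A *v x k"
    and "(\<lambda>k. transpose A *v r k) \<longlonglongrightarrow> 0"
  shows "r \<longlonglongrightarrow> 0"
proof (rule tendsto_if_injective_on_subspace
    [OF subspace_range_matrix_vector transpose_injective_on_range])
  show "r k \<in> range ((*v) A)" for k
    using assms(1,2) by (metis matrix_vector_mult_diff_distrib rangeI)
  show "0 \<in> range ((*v) A)" by (metis matrix_vector_mult_0_right rangeI)
qed (use assms(3) in simp)

lemma cta_residual_eq:
  assumes "A ** D = H"
  shows "cta_r H (b - A *v x0) k = b - A *v cta_x H D x0 (b - A *v x0) k"
proof (induction k)
  case (Suc k)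
  then show ?case
    using assms by (simp add: cta_r_Suc F1_def matrix_vector_right_distrib matrix_vector_mult_scaleR
        matrix_vector_mul_assoc del: transpose_matrix_vector)
qed (simp add: cta_r_def)

lemma cta_x_in_range:
  assumes "x0 \<in> range ((*v) D)"
  shows "cta_x H D x0 r0 k \<in> range ((*v) D)"
proof (induction k)
  case (Suc k)
  then show ?case
    by (simp add: subspace_add subspace_scale rangeI subspace_range_matrix_vector)
qed (use assms in simp)

lemma matrix_vector_tendsto_if_residual_tendsto_0:
  fixes A :: "real^'n^'m"
  assumes "\<And>k. r k = b - A *v x k" and "r \<longlonglongrightarrow> 0"
  shows "(\<lambda>k. A *v x k) \<longlonglongrightarrow> b"
proof -
  have "(\<lambda>k. b - r k) \<longlonglongrightarrow> b - 0" by (rule tendsto_diff[OF tendsto_const assms(2)])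
  then show ?thesis by (simp add: assms(1))
qed

lemma accum_point_solves_if_residual_tendsto_0:
  fixes A :: "real^'n^'m"
  assumes "\<And>k. r k = b - A *v x k" and "r \<longlonglongrightarrow> 0" and "accum_point x l"
  shows "A *v l = b"
  using linear_continuous_at[OF matrix_vector_mul_bounded_linear]
    matrix_vector_tendsto_if_residual_tendsto_0[OF assms(1,2)] assms(3)
  by (rule accum_point_image_eq_lim)

lemma cta_mul_transpose_properties:
  fixes A :: "real^'n^'m" and b w0 :: "real^'m"
  assumes H_def: "H = A ** transpose A" and x0_def: "x0 = transpose A *v w0"
    and r0_def: "r0 = b - A *v x0" and r_def: "r = cta_r H r0"
    and x_def: "x = cta_x H (transpose A) x0 r0"
    and nz: "\<forall>k. H *v r k \<noteq> 0"
  shows "(rank A = CARD('m) \<longrightarrow>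
             (\<exists>xs. A *v xs = b \<and> x \<longlonglongrightarrow> xs) \<and>
             (\<exists>xs. min_norm_solution A b xs \<and> x \<longlonglongrightarrow> xs))
          \<and> (\<lambda>k. transpose A *v r k) \<longlonglongrightarrow> 0
          \<and> ((\<exists>z. A *v z = b) \<and> bounded (range x) \<longrightarrow>
               r \<longlonglongrightarrow> 0 \<and> (\<forall>l. accum_point x l \<longrightarrow> A *v l = b))
          \<and> ((\<exists>z. A *v z = b) \<longrightarrow>
               (\<exists>w. \<forall>k. x k = transpose A *v w k) \<and>
               (\<exists>xs. min_norm_solution A b xs \<and>
                  (\<forall>w. (\<forall>k. x k = transpose A *v w k) \<and> bounded (range w) \<longrightarrow>
                        x \<longlonglongrightarrow> xs)))"
proof -
  have rx: "r k = b - A *v x k" for k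
    unfolding r_def x_def r0_def H_def by (rule cta_residual_eq[OF refl])
  have grad: "(\<lambda>k. transpose A *v r k) \<longlonglongrightarrow> 0"
    using cta_mul_transpose_gradient_tendsto_0 nz unfolding r_def H_def by blast
  have residual: "r \<longlonglongrightarrow> 0" if "A *v z = b" for z
    using that rx grad by (rule residual_tendsto_0)
  have x_range: "x k \<in> range ((*v) (transpose A))" for k
    unfolding x_def x0_def by (rule cta_x_in_range[OF rangeI])
  have converges: "\<exists>xs. min_norm_solution A b xs \<and> x \<longlonglongrightarrow> xs" if z: "A *v z = b" for z
  proof -
    obtain y where y: "y \<in> range ((*v) (transpose A))" "A *v y = b"
      using solution_in_range_transpose_exists[OF z] .
    have "(\<lambda>k. A *v x k) \<longlonglongrightarrow> A *v y"
      using matrix_vector_tendsto_if_residual_tendsto_0[OF rx residual[OF z]] y(2) by simp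
    then have "x \<longlonglongrightarrow> y"
      by (rule tendsto_if_injective_on_subspace[OF subspace_range_matrix_vector
            transpose_injective_on_range[of "transpose A", unfolded transpose_transpose] x_range y(1)])
    then show ?thesis using min_norm_solution_if_in_range_transpose[OF y] by blast
  qed
  have "\<forall>k. \<exists>w. x k = transpose A *v w" using x_range by blast
  then have "\<exists>w. \<forall>k. x k = transpose A *v w k" by (rule choice)
  moreover have "\<exists>z. A *v z = b" if "rank A = CARD('m)"
    using that full_rank_surjective[of A] by (metis surjD)
  moreover have "A *v l = b" if "r \<longlonglongrightarrow> 0" and "accum_point x l" for l
    using rx that by (rule accum_point_solves_if_residual_tendsto_0)
  ultimately show ?thesis
    using grad converges residual unfolding min_norm_solution_def by blast
qed

lemma cta_psd_properties:
  fixes A :: "real^'m^'m" and b w0 :: "real^'m"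
  assumes x0_def: "x0 = transpose A *v w0" and r0_def: "r0 = b - A *v x0"
    and r_def: "r = cta_r A r0" and x_def: "x = cta_x A (mat 1) x0 r0"
    and sym: "transpose A = A" and psd: "psd_matrix A" and nz: "\<forall>k. A *v r k \<noteq> 0"
  shows "(rank A = CARD('m) \<longrightarrow> (\<exists>xs. A *v xs = b \<and> x \<longlonglongrightarrow> xs))
          \<and> (\<lambda>k. transpose A *v r k) \<longlonglongrightarrow> 0
          \<and> ((\<exists>z. A *v z = b) \<and> bounded (range x) \<longrightarrow>
               r \<longlonglongrightarrow> 0 \<and> (\<forall>l. accum_point x l \<longrightarrow> A *v l = b))"
proof -
  have rx: "r k = b - A *v x k" for k
    unfolding r_def x_def r0_def by (rule cta_residual_eq) (rule matrix_mul_rid)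
  have grad: "(\<lambda>k. transpose A *v r k) \<longlonglongrightarrow> 0"
    using cta_psd_gradient_tendsto_0[OF sym psd] nz unfolding r_def sym by blast
  have residual: "r \<longlonglongrightarrow> 0" if "A *v z = b" for z
    using that rx grad by (rule residual_tendsto_0)
  have "\<exists>xs. A *v xs = b \<and> x \<longlonglongrightarrow> xs" if "rank A = CARD('m)"
  proof -
    obtain z where z: "A *v z = b"
      using \<open>rank A = CARD('m)\<close> full_rank_surjective[of A] by (metis surjD)
    have "inj ((*v) A)" using that full_rank_injective[of A] by simp
    then have inj0: "\<forall>v\<in>UNIV. A *v v = 0 \<longrightarrow> v = 0"
      by (simp add: inj_on_def)
    have "(\<lambda>k. A *v x k) \<longlonglongrightarrow> A *v z"
      using matrix_vector_tendsto_if_residual_tendsto_0[OF rx residual[OF z]] z by simp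
    then have "x \<longlonglongrightarrow> z"
      by (rule tendsto_if_injective_on_subspace[OF subspace_UNIV inj0 UNIV_I UNIV_I])
    with z show ?thesis by blast
  qed
  moreover have "A *v l = b" if "r \<longlonglongrightarrow> 0" and "accum_point x l" for l
    using rx that by (rule accum_point_solves_if_residual_tendsto_0)
  ultimately show ?thesis using grad residual by auto
qed

theorem mainTheorem6:
  shows
  "(\<forall>(A :: real^'n^'m) (b :: real^'m) (w0 :: real^'m).
      let H = A ** transpose A; x0 = transpose A *v w0; r0 = b - A *v x0;
          r = cta_r H r0; x = cta_x H (transpose A) x0 r0
      in (\<forall>k. H *v r k \<noteq> 0) \<longrightarrow>
         ((rank A = CARD('m) \<longrightarrow>
             (\<exists>xs. A *v xs = b \<and> x \<longlonglongrightarrow> xs) \<and>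
             (\<exists>xs. min_norm_solution A b xs \<and> x \<longlonglongrightarrow> xs))
          \<and> (\<lambda>k. transpose A *v r k) \<longlonglongrightarrow> 0
          \<and> ((\<exists>z. A *v z = b) \<and> bounded (range x) \<longrightarrow>
               r \<longlonglongrightarrow> 0 \<and> (\<forall>l. accum_point x l \<longrightarrow> A *v l = b))
          \<and> ((\<exists>z. A *v z = b) \<longrightarrow>
               (\<exists>w. \<forall>k. x k = transpose A *v w k) \<and>
               (\<exists>xs. min_norm_solution A b xs \<and>
                  (\<forall>w. (\<forall>k. x k = transpose A *v w k) \<and> bounded (range w) \<longrightarrow>
                        x \<longlonglongrightarrow> xs)))))
   \<and>
   (\<forall>(A :: real^'m^'m) (b :: real^'m) (w0 :: real^'m).
      let H = A; x0 = transpose A *v w0; r0 = b - A *v x0;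
          r = cta_r H r0; x = cta_x H (mat 1) x0 r0
      in transpose A = A \<and> psd_matrix A \<and> (\<forall>k. H *v r k \<noteq> 0) \<longrightarrow>
         ((rank A = CARD('m) \<longrightarrow> (\<exists>xs. A *v xs = b \<and> x \<longlonglongrightarrow> xs))
          \<and> (\<lambda>k. transpose A *v r k) \<longlonglongrightarrow> 0
          \<and> ((\<exists>z. A *v z = b) \<and> bounded (range x) \<longrightarrow>
               r \<longlonglongrightarrow> 0 \<and> (\<forall>l. accum_point x l \<longrightarrow> A *v l = b))))"
  unfolding Let_def
  using cta_mul_transpose_properties[OF refl refl refl refl refl]
    cta_psd_properties[OF refl refl refl refl]
  by blast

end
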